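(* For $n\ge0$ let $d_n$ be the number of FQ-legal index sets contained in $\{1,\dots,n\}$ (including the empty set; $d_0=1$); for $n\ge1$ let $c_n$ be the number of FQ-legal index sets contained in $\{1,\dots,n\}$ that contain $n$, with $c_0=1$; and for $n\ge1$ let $b_n$ be the number of FQ-legal index sets contained in $\{1,\dots,n\}$ that contain both $n$ and $n-2$. Then for all $n\ge7$, \[ d_n=c_n+c_{n-1}+\cdots+c_0=c_n+d_{n-1},\qquad c_n=d_{n-5}+c_{n-2}-b_{n-2},\qquad b_n=d_{n-7}, \] and for all $n\ge9$, \[ d_n=d_{n-1}+d_{n-2}-d_{n-3}+d_{n-5}-d_{n-9}. \]
   Context: An FQ-legal index set is a finite set $S$ of positive integers such that no two elements of $S$ differ by $1$, $3$ or $4$, and $S$ does not contain both $1$ and $3$. (These are exactly the index sets $\{\ell_1,\dots,\ell_t\}$ of FQ-legal decompositions $q_{\ell_1}+\cdots+q_{\ell_t}$ with respect to the Fibonacci Quilt sequence $(q_i)$, where an FQ-legal decomposition uses distinct indices with pairwise differences not in $\{1,3,4\}$ and not both indices $1$ and $3$.) First values: $(d_1,\dots,d_{13})=(2,3,4,6,8,11,15,21,30,42,59,82,114)$. *)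

theory Defs
  imports Main
begin

definition FQ_legal :: "nat set \<Rightarrow> bool" where
  "FQ_legal S \<longleftrightarrow> finite S \<and> (\<forall>x\<in>S. 0 < x) \<and>
     (\<forall>x\<in>S. \<forall>y\<in>S. x < y \<longrightarrow> y - x \<notin> {1, 3, 4}) \<and>
     \<not> (1 \<in> S \<and> 3 \<in> S)"

definition fq_d :: "nat \<Rightarrow> nat" where
  "fq_d n = card {S. S \<subseteq> {1..n} \<and> FQ_legal S}"

definition fq_c :: "nat \<Rightarrow> nat" where
  "fq_c n = (if n = 0 then 1 else card {S. S \<subseteq> {1..n} \<and> FQ_legal S \<and> n \<in> S})"

text \<open>Only meaningful for n >= 1; for n <= 2 the element n - 2 is not a positive index,
  and since 0 never belongs to a legal set the count is 0, as in the paper.\<close>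
definition fq_b :: "nat \<Rightarrow> nat" where
  "fq_b n = card {S. S \<subseteq> {1..n} \<and> FQ_legal S \<and> n \<in> S \<and> n - 2 \<in> S}"

end

theory Submission
  imports Defs
begin

text \<open>A legal set with largest element \<open>n\<close> is \<open>{n}\<close> together with a legal set whose elements
  all lie at distance \<open>2\<close> or at least \<open>5\<close> below \<open>n\<close>. These remainders are the legal subsets of
  \<open>{1..n-5}\<close> and the legal sets with largest element \<open>n - 2\<close> that avoid \<open>n - 4\<close>; those
  containing \<open>n - 2\<close> are exactly \<open>{n - 2}\<close> together with a legal subset of \<open>{1..n-7}\<close>.
  Counting gives \<open>c\<^sub>n + b\<^sub>n\<^sub>-\<^sub>2 = d\<^sub>n\<^sub>-\<^sub>5 + c\<^sub>n\<^sub>-\<^sub>2\<close> and \<open>b\<^sub>n = d\<^sub>n\<^sub>-\<^sub>7\<close>; together with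
  \<open>d\<^sub>n = c\<^sub>n + d\<^sub>n\<^sub>-\<^sub>1\<close> this eliminates \<open>c\<close> and \<open>b\<close>.\<close>

definition FQ_sets :: "nat \<Rightarrow> nat set set" where
  "FQ_sets n = {S. S \<subseteq> {1..n} \<and> FQ_legal S}"

definition FQ_sets_top :: "nat \<Rightarrow> nat set set" where
  "FQ_sets_top n = {S \<in> FQ_sets n. n \<in> S}"

definition FQ_sets_top2 :: "nat \<Rightarrow> nat set set" where
  "FQ_sets_top2 n = {S \<in> FQ_sets_top n. n - 2 \<in> S}"

lemma finite_FQ_sets: "finite (FQ_sets n)"
  by (rule finite_subset[of _ "Pow {1..n}"]) (auto simp: FQ_sets_def)

lemma finite_FQ_sets_top: "finite (FQ_sets_top n)"
  using finite_FQ_sets by (simp add: FQ_sets_top_def)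

lemma FQ_sets_top2_subset: "FQ_sets_top2 n \<subseteq> FQ_sets_top n"
  by (auto simp: FQ_sets_top2_def)

lemma fq_d_eq_card: "fq_d n = card (FQ_sets n)"
  by (simp add: fq_d_def FQ_sets_def)

lemma fq_c_eq_card: "n \<ge> 1 \<Longrightarrow> fq_c n = card (FQ_sets_top n)"
  by (simp add: fq_c_def FQ_sets_top_def FQ_sets_def conj_assoc)

lemma fq_b_eq_card: "fq_b n = card (FQ_sets_top2 n)"
  by (simp add: fq_b_def FQ_sets_top2_def FQ_sets_top_def FQ_sets_def conj_assoc)

lemma FQ_legal_diff:
  "FQ_legal S \<Longrightarrow> x \<in> S \<Longrightarrow> y \<in> S \<Longrightarrow> x < y \<Longrightarrow> y - x \<notin> {1, 3, 4}"
  unfolding FQ_legal_def by blast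

lemma FQ_legal_subset: "FQ_legal S \<Longrightarrow> T \<subseteq> S \<Longrightarrow> FQ_legal T"
  unfolding FQ_legal_def by (meson finite_subset subset_iff)

lemma FQ_legal_insert_max_iff:
  assumes "0 < n" and "\<forall>x\<in>T. x < n"
  shows "FQ_legal (insert n T) \<longleftrightarrow>
    FQ_legal T \<and> (\<forall>x\<in>T. n - x \<notin> {1, 3, 4}) \<and> \<not> (n = 3 \<and> 1 \<in> T)"
proof
  assume legal: "FQ_legal (insert n T)"
  then have "FQ_legal T"
    unfolding FQ_legal_def by (meson finite_insert insertCI)
  with legal assms(2) show "FQ_legal T \<and> (\<forall>x\<in>T. n - x \<notin> {1, 3, 4}) \<and> \<not> (n = 3 \<and> 1 \<in> T)"
    using FQ_legal_diff[OF legal] unfolding FQ_legal_def by blast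
next
  assume "FQ_legal T \<and> (\<forall>x\<in>T. n - x \<notin> {1, 3, 4}) \<and> \<not> (n = 3 \<and> 1 \<in> T)"
  then have legal: "FQ_legal T" and far: "\<forall>x\<in>T. n - x \<notin> {1, 3, 4}"
    and not13: "\<not> (n = 3 \<and> 1 \<in> T)" by blast+
  have "y - x \<notin> {1, 3, 4}" if "x \<in> insert n T" "y \<in> insert n T" "x < y" for x y
    using that assms(2) far FQ_legal_diff[OF legal] by (metis insert_iff less_asym)
  moreover have "\<not> (1 \<in> insert n T \<and> 3 \<in> insert n T)"
    using legal not13 assms(2) unfolding FQ_legal_def by auto
  ultimately show "FQ_legal (insert n T)"
    using legal assms(1) unfolding FQ_legal_def by auto
qed

lemma card_image_insert:
  assumes "\<forall>A\<in>F. a \<notin> A"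
  shows "card (insert a ` F) = card F"
proof (rule card_image, rule inj_onI)
  fix A B assume "A \<in> F" "B \<in> F" "insert a A = insert a B"
  with assms show "A = B" by (metis insert_ident)
qed

lemma FQ_sets_split:
  assumes "n \<ge> 1"
  shows "FQ_sets n = FQ_sets_top n \<union> FQ_sets (n - 1)"
    and "FQ_sets_top n \<inter> FQ_sets (n - 1) = {}"
proof -
  have "S \<subseteq> {1..n - 1}" if "S \<subseteq> {1..n}" "n \<notin> S" for S :: "nat set"
  proof
    fix x assume "x \<in> S"
    with that have "1 \<le> x" "x \<le> n" "x \<noteq> n" by auto
    then show "x \<in> {1..n - 1}" by simp
  qed
  moreover have "{1..n - 1} \<subseteq> {1..n}" by auto
  ultimately show "FQ_sets n = FQ_sets_top n \<union> FQ_sets (n - 1)"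
    unfolding FQ_sets_top_def FQ_sets_def by blast
  show "FQ_sets_top n \<inter> FQ_sets (n - 1) = {}"
    using assms by (auto simp: FQ_sets_top_def FQ_sets_def)
qed

lemma fq_d_step: "n \<ge> 1 \<Longrightarrow> fq_d n = fq_c n + fq_d (n - 1)"
  using FQ_sets_split finite_FQ_sets finite_FQ_sets_top
  by (simp add: fq_d_eq_card fq_c_eq_card card_Un_disjoint)

lemma fq_d_0: "fq_d 0 = 1"
proof -
  have "FQ_sets 0 = {{}}" by (auto simp: FQ_sets_def FQ_legal_def)
  then show ?thesis by (simp add: fq_d_eq_card)
qed

lemma fq_d_eq_sum_fq_c: "fq_d n = (\<Sum>k\<le>n. fq_c k)"
proof (induction n)
  case 0
  then show ?case by (simp add: fq_d_0 fq_c_def)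
next
  case (Suc n)
  then show ?case using fq_d_step[of "Suc n"] by simp
qed

definition FQ_extendable :: "nat \<Rightarrow> nat set set" where
  "FQ_extendable n = {T. T \<subseteq> {1..<n} \<and> FQ_legal T \<and>
     (\<forall>x\<in>T. n - x \<notin> {1, 3, 4}) \<and> \<not> (n = 3 \<and> 1 \<in> T)}"

lemma FQ_sets_top_eq_image:
  assumes "n \<ge> 1"
  shows "FQ_sets_top n = insert n ` FQ_extendable n"
proof
  show "FQ_sets_top n \<subseteq> insert n ` FQ_extendable n"
  proof
    fix S assume "S \<in> FQ_sets_top n"
    then have S: "S \<subseteq> {1..n}" "FQ_legal S" "n \<in> S"
      by (auto simp: FQ_sets_top_def FQ_sets_def)
    define T where "T = S - {n}"
    have "T \<subseteq> {1..<n}" using S(1) by (auto simp: T_def)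
    moreover have "S = insert n T" using S(3) by (auto simp: T_def)
    moreover have "FQ_legal T \<and> (\<forall>x\<in>T. n - x \<notin> {1, 3, 4}) \<and> \<not> (n = 3 \<and> 1 \<in> T)"
    proof -
      have "\<forall>x\<in>T. x < n" using \<open>T \<subseteq> {1..<n}\<close> by auto
      then show ?thesis
        using FQ_legal_insert_max_iff[of n T] S(2) assms \<open>S = insert n T\<close> by simp
    qed
    ultimately show "S \<in> insert n ` FQ_extendable n"
      by (auto simp: FQ_extendable_def)
  qed
next
  show "insert n ` FQ_extendable n \<subseteq> FQ_sets_top n"
  proof
    fix S assume "S \<in> insert n ` FQ_extendable n"
    then obtain T where "S = insert n T" "T \<in> FQ_extendable n" by blast
    moreover have "\<forall>x\<in>T. x < n"
      using \<open>T \<in> FQ_extendable n\<close> by (auto simp: FQ_extendable_def)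
    ultimately have "FQ_legal (insert n T)"
      using FQ_legal_insert_max_iff[of n T] assms by (simp add: FQ_extendable_def)
    moreover have "insert n T \<subseteq> {1..n}"
      using assms \<open>T \<in> FQ_extendable n\<close> by (auto simp: FQ_extendable_def)
    ultimately show "S \<in> FQ_sets_top n"
      using \<open>S = insert n T\<close> by (simp add: FQ_sets_top_def FQ_sets_def)
  qed
qed

lemma card_FQ_sets_top: "n \<ge> 1 \<Longrightarrow> card (FQ_sets_top n) = card (FQ_extendable n)"
  unfolding FQ_sets_top_eq_image
  by (rule card_image_insert) (auto simp: FQ_extendable_def)

lemma FQ_extendable_eq:
  assumes "n \<ge> 5"
  shows "FQ_extendable n = FQ_sets (n - 5) \<union> (FQ_sets_top (n - 2) - FQ_sets_top2 (n - 2))"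
proof
  show "FQ_extendable n \<subseteq> FQ_sets (n - 5) \<union> (FQ_sets_top (n - 2) - FQ_sets_top2 (n - 2))"
  proof
    fix T assume "T \<in> FQ_extendable n"
    then have T: "T \<subseteq> {1..<n}" "FQ_legal T" "\<forall>x\<in>T. n - x \<notin> {1, 3, 4}"
      by (auto simp: FQ_extendable_def)
    have near: "x \<le> n - 5 \<or> x = n - 2" if "x \<in> T" for x
      using T that by fastforce
    show "T \<in> FQ_sets (n - 5) \<union> (FQ_sets_top (n - 2) - FQ_sets_top2 (n - 2))"
    proof (cases "n - 2 \<in> T")
      case True
      have "T \<subseteq> {1..n - 2}" using T(1) near by force
      moreover have "n - 2 - 2 \<notin> T" using near assms by fastforce
      ultimately show ?thesis
        using True T(2) by (simp add: FQ_sets_top2_def FQ_sets_top_def FQ_sets_def)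
    next
      case False
      then have "T \<subseteq> {1..n - 5}" using T(1) near by force
      then show ?thesis using T(2) by (simp add: FQ_sets_def)
    qed
  qed
next
  show "FQ_sets (n - 5) \<union> (FQ_sets_top (n - 2) - FQ_sets_top2 (n - 2)) \<subseteq> FQ_extendable n"
  proof
    fix T assume "T \<in> FQ_sets (n - 5) \<union> (FQ_sets_top (n - 2) - FQ_sets_top2 (n - 2))"
    then consider "T \<subseteq> {1..n - 5}" "FQ_legal T"
      | "T \<subseteq> {1..n - 2}" "FQ_legal T" "n - 2 \<in> T" "n - 4 \<notin> T"
      by (auto simp: FQ_sets_top2_def FQ_sets_top_def FQ_sets_def numeral_eq_Suc)
    then show "T \<in> FQ_extendable n"
    proof cases
      case 1
      then show ?thesis using assms by (force simp: FQ_extendable_def)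
    next
      case 2
      \<comment> \<open>\<open>n - 3\<close> is excluded by its distance \<open>1\<close> to \<open>n - 2\<close>\<close>
      have "x \<le> n - 5 \<or> x = n - 2" if "x \<in> T" for x
      proof -
        have "1 \<le> x" "x \<le> n - 2" "x \<noteq> n - 4" using 2 that by auto
        moreover have "x < n - 2 \<Longrightarrow> n - 2 - x \<noteq> 1"
          using FQ_legal_diff[OF 2(2) that 2(3)] by simp
        ultimately show ?thesis by linarith
      qed
      then show ?thesis using 2 assms by (force simp: FQ_extendable_def)
    qed
  qed
qed

lemma FQ_extendable_containing_eq_image:
  assumes "n \<ge> 4"
  shows "{T \<in> FQ_extendable n. n - 2 \<in> T} = insert (n - 2) ` FQ_sets (n - 7)"
proof
  show "{T \<in> FQ_extendable n. n - 2 \<in> T} \<subseteq> insert (n - 2) ` FQ_sets (n - 7)"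
  proof
    fix T assume "T \<in> {T \<in> FQ_extendable n. n - 2 \<in> T}"
    then have T: "T \<subseteq> {1..<n}" "FQ_legal T" "\<forall>x\<in>T. n - x \<notin> {1, 3, 4}" "n - 2 \<in> T"
      by (auto simp: FQ_extendable_def)
    define U where "U = T - {n - 2}"
    have "U \<subseteq> {1..n - 7}"
    proof
      fix x assume "x \<in> U"
      then have "x \<in> T" "x \<noteq> n - 2" by (auto simp: U_def)
      moreover from this have "x < n - 2 \<Longrightarrow> n - 2 - x \<notin> {1, 3, 4}"
        using FQ_legal_diff[OF T(2) _ T(4)] by blast
      ultimately show "x \<in> {1..n - 7}" using T(1,3) by fastforce
    qed
    moreover have "FQ_legal U" using FQ_legal_subset[OF T(2)] by (auto simp: U_def)
    moreover have "T = insert (n - 2) U" using T(4) by (auto simp: U_def)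
    ultimately show "T \<in> insert (n - 2) ` FQ_sets (n - 7)" by (auto simp: FQ_sets_def)
  qed
next
  show "insert (n - 2) ` FQ_sets (n - 7) \<subseteq> {T \<in> FQ_extendable n. n - 2 \<in> T}"
  proof
    fix T assume "T \<in> insert (n - 2) ` FQ_sets (n - 7)"
    then obtain U where T: "T = insert (n - 2) U" and U: "U \<subseteq> {1..n - 7}" "FQ_legal U"
      by (auto simp: FQ_sets_def)
    have "\<forall>x\<in>U. x < n - 2" using U(1) assms by force
    moreover have "\<forall>x\<in>U. n - 2 - x \<notin> {1, 3, 4}" using U(1) by fastforce
    moreover have "1 \<notin> U" if "n = 5" using U(1) that by auto
    ultimately have "FQ_legal T"
      using FQ_legal_insert_max_iff[of "n - 2" U] U(2) assms T by auto
    moreover have "\<forall>x\<in>T. n - x \<notin> {1, 3, 4}" using U(1) assms T by fastforce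
    moreover have "T \<subseteq> {1..<n}" using U(1) assms T by force
    ultimately show "T \<in> {T \<in> FQ_extendable n. n - 2 \<in> T}"
      using assms T by (simp add: FQ_extendable_def)
  qed
qed

lemma fq_c_recurrence:
  assumes "n \<ge> 5"
  shows "fq_c n + fq_b (n - 2) = fq_d (n - 5) + fq_c (n - 2)"
proof -
  let ?A = "FQ_sets_top (n - 2)" and ?B = "FQ_sets_top2 (n - 2)"
  have "FQ_sets (n - 5) \<inter> ?A = {}"
    using assms by (force simp: FQ_sets_top_def FQ_sets_def)
  then have "card (FQ_extendable n) = card (FQ_sets (n - 5)) + card (?A - ?B)"
    unfolding FQ_extendable_eq[OF assms]
    by (intro card_Un_disjoint) (auto simp: finite_FQ_sets finite_FQ_sets_top)
  moreover have "card (?A - ?B) + card ?B = card ?A"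
    using finite_subset[OF FQ_sets_top2_subset finite_FQ_sets_top]
    by (simp add: card_Diff_subset card_mono FQ_sets_top2_subset finite_FQ_sets_top)
  moreover have "fq_c n = card (FQ_extendable n)" "fq_c (n - 2) = card ?A"
    using assms card_FQ_sets_top[of n] by (simp_all add: fq_c_eq_card)
  ultimately show ?thesis by (simp add: fq_b_eq_card fq_d_eq_card)
qed

lemma fq_b_eq_fq_d:
  assumes "n \<ge> 4"
  shows "fq_b n = fq_d (n - 7)"
proof -
  have "FQ_sets_top2 n = {S \<in> insert n ` FQ_extendable n. n - 2 \<in> S}"
    using assms by (simp add: FQ_sets_top2_def FQ_sets_top_eq_image)
  also have "\<dots> = insert n ` {T \<in> FQ_extendable n. n - 2 \<in> T}"
    using assms by fastforce
  also have "\<dots> = insert n ` insert (n - 2) ` FQ_sets (n - 7)"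
    using FQ_extendable_containing_eq_image[OF assms] by simp
  finally have "card (FQ_sets_top2 n) = card (insert n ` insert (n - 2) ` FQ_sets (n - 7))"
    by simp
  also have "\<dots> = card (insert (n - 2) ` FQ_sets (n - 7))"
    by (rule card_image_insert) (use assms in \<open>auto simp: FQ_sets_def\<close>)
  also have "\<dots> = card (FQ_sets (n - 7))"
    by (rule card_image_insert) (use assms in \<open>force simp: FQ_sets_def\<close>)
  finally show ?thesis by (simp add: fq_b_eq_card fq_d_eq_card)
qed

lemma fq_d_recurrence:
  assumes "n \<ge> 9"
  shows "int (fq_d n) = int (fq_d (n - 1)) + int (fq_d (n - 2)) - int (fq_d (n - 3))
                        + int (fq_d (n - 5)) - int (fq_d (n - 9))"
proof -
  have "fq_d n = fq_c n + fq_d (n - 1)" using assms by (simp add: fq_d_step)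
  moreover have "fq_d (n - 2) = fq_c (n - 2) + fq_d (n - 3)"
    using assms fq_d_step[of "n - 2"] by (simp add: numeral_eq_Suc)
  moreover have "fq_c n + fq_b (n - 2) = fq_d (n - 5) + fq_c (n - 2)"
    using assms by (simp add: fq_c_recurrence)
  moreover have "fq_b (n - 2) = fq_d (n - 9)"
    using assms fq_b_eq_fq_d[of "n - 2"] by (simp add: numeral_eq_Suc)
  ultimately show ?thesis by simp
qed

theorem mainTheorem10:
  shows "(\<forall>n::nat. n \<ge> 7 \<longrightarrow>
            fq_d n = (\<Sum>k\<le>n. fq_c k) \<and>
            fq_d n = fq_c n + fq_d (n - 1) \<and>
            int (fq_c n) = int (fq_d (n - 5)) + int (fq_c (n - 2)) - int (fq_b (n - 2)) \<and>
            fq_b n = fq_d (n - 7))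
       \<and> (\<forall>n::nat. n \<ge> 9 \<longrightarrow>
            int (fq_d n) = int (fq_d (n - 1)) + int (fq_d (n - 2)) - int (fq_d (n - 3))
                           + int (fq_d (n - 5)) - int (fq_d (n - 9)))"
proof (intro conjI allI impI)
  fix n :: nat assume n: "n \<ge> 7"
  show "fq_d n = (\<Sum>k\<le>n. fq_c k)" by (rule fq_d_eq_sum_fq_c)
  show "fq_d n = fq_c n + fq_d (n - 1)" using n by (simp add: fq_d_step)
  show "int (fq_c n) = int (fq_d (n - 5)) + int (fq_c (n - 2)) - int (fq_b (n - 2))"
    using fq_c_recurrence[of n] n by linarith
  show "fq_b n = fq_d (n - 7)" using n by (simp add: fq_b_eq_fq_d)
next
  fix n :: nat assume "n \<ge> 9"
  then show "int (fq_d n) = int (fq_d (n - 1)) + int (fq_d (n - 2)) - int (fq_d (n - 3))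
                           + int (fq_d (n - 5)) - int (fq_d (n - 9))"
    by (rule fq_d_recurrence)
qed

end
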